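(* Let $(X,\mathscr{R})$ be a closed mixed reaction network with $\mathscr{R}=\mathscr{R}_{\mathrm{rev}}\sqcup\mathscr{R}_{\mathrm{irr}}$. Then $(X,\mathscr{R})$ is strictly thermodynamically sound if and only if no futile cycle contains an irreversible reaction. Here a futile cycle $v$ contains an irreversible reaction if $v_r>0$ for some $r\in\mathscr{R}_{\mathrm{irr}}$.
   Context: A reaction network (RN) $(X,\mathscr{R})$ consists of a finite non-empty set $X$ of species and a finite non-empty set $\mathscr{R}$ of reactions. Each reaction $r$ is given by stoichiometric coefficients $s^-_{xr},s^+_{xr}\in\mathbb{N}_0$. The stoichiometric matrix $S\in\mathbb{Z}^{X\times\mathscr{R}}$ has entries $S_{xr}=s^+_{xr}-s^-_{xr}$. A reaction $r$ is proper if there are $x,y$ with $S_{xr}<0<S_{yr}$, and the RN is closed if all reactions are proper. The reverse $\bar r$ of $r$ has $s^-_{x\bar r}=s^+_{xr}$ and $s^+_{x\bar r}=s^-_{xr}$. A mixed RN has $\mathscr{R}=\mathscr{R}_{\mathrm{rev}}\sqcup\mathscr{R}_{\mathrm{irr}}$, where $r\in\mathscr{R}_{\mathrm{rev}}$ implies $\bar r\in\mathscr{R}_{\mathrm{rev}}$, and $r\in\mathscr{R}_{\mathrm{irr}}$ implies $\bar r\notin\mathscr{R}$. For $v\in\mathbb{R}^{\mathscr{R}}$, $v>0$ means $v$ is componentwise non-negative and nonzero. A futile cycle is a vector $v>0$ with $Sv=0$. For $g\in\mathbb{R}^{\mathscr{R}}$ (reaction energies), $(X,\mathscr{R},g)$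 is thermodynamic if $g\in(\ker S)^\perp$. The mixed RN is strictly thermodynamically sound if, for every $\gamma>1$, there is $g$ with all of the following: - $(X,\mathscr{R},g)$ is thermodynamic; - $|g_r|\le1$ for all $r\in\mathscr{R}_{\mathrm{rev}}$; - $g_r\le-\gamma$ for all $r\in\mathscr{R}_{\mathrm{irr}}$. *)

theory Defs
  imports Main "HOL-Analysis.Analysis"
begin

text \<open>A reaction over species of type 'x is given by its stoichiometric
coefficients (s^-, s^+), i.e. a pair of functions 'x => nat.\<close>

type_synonym 'x reaction = "('x \<Rightarrow> nat) \<times> ('x \<Rightarrow> nat)"

definition reaction_network :: "'x set \<Rightarrow> 'x reaction set \<Rightarrow> bool" where
  "reaction_network X R \<longleftrightarrow> finite X \<and> X \<noteq> {} \<and> finite R \<and> R \<noteq> {} \<and>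
     (\<forall>r\<in>R. \<forall>x. x \<notin> X \<longrightarrow> fst r x = 0 \<and> snd r x = 0)"

definition stoich :: "'x \<Rightarrow> 'x reaction \<Rightarrow> int" where
  "stoich x r = int (snd r x) - int (fst r x)"

definition rev_reaction :: "'x reaction \<Rightarrow> 'x reaction" where
  "rev_reaction r = (snd r, fst r)"

definition proper_reaction :: "'x set \<Rightarrow> 'x reaction \<Rightarrow> bool" where
  "proper_reaction X r \<longleftrightarrow> (\<exists>x\<in>X. \<exists>y\<in>X. stoich x r < 0 \<and> 0 < stoich y r)"

definition closed_RN :: "'x set \<Rightarrow> 'x reaction set \<Rightarrow> bool" where
  "closed_RN X R \<longleftrightarrow> (\<forall>r\<in>R. proper_reaction X r)"

definition mixed_RN :: "'x set \<Rightarrow> 'x reaction set \<Rightarrow> 'x reaction set \<Rightarrow> 'x reaction set \<Rightarrow> bool" where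
  "mixed_RN X R Rrev Rirr \<longleftrightarrow> reaction_network X R \<and>
     R = Rrev \<union> Rirr \<and> Rrev \<inter> Rirr = {} \<and>
     (\<forall>r\<in>Rrev. rev_reaction r \<in> Rrev) \<and>
     (\<forall>r\<in>Rirr. rev_reaction r \<notin> R)"

text \<open>Vectors in R^R are functions 'x reaction => real; only values on R matter.\<close>
definition in_ker_S :: "'x set \<Rightarrow> 'x reaction set \<Rightarrow> ('x reaction \<Rightarrow> real) \<Rightarrow> bool" where
  "in_ker_S X R v \<longleftrightarrow> (\<forall>x\<in>X. (\<Sum>r\<in>R. real_of_int (stoich x r) * v r) = 0)"

definition vec_pos :: "'x reaction set \<Rightarrow> ('x reaction \<Rightarrow> real) \<Rightarrow> bool" where
  "vec_pos R v \<longleftrightarrow> (\<forall>r\<in>R. 0 \<le> v r) \<and> (\<exists>r\<in>R. v r \<noteq> 0)"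

definition futile_cycle :: "'x set \<Rightarrow> 'x reaction set \<Rightarrow> ('x reaction \<Rightarrow> real) \<Rightarrow> bool" where
  "futile_cycle X R v \<longleftrightarrow> vec_pos R v \<and> in_ker_S X R v"

definition thermodynamic :: "'x set \<Rightarrow> 'x reaction set \<Rightarrow> ('x reaction \<Rightarrow> real) \<Rightarrow> bool" where
  "thermodynamic X R g \<longleftrightarrow> (\<forall>v. in_ker_S X R v \<longrightarrow> (\<Sum>r\<in>R. g r * v r) = 0)"

definition strictly_thermodynamically_sound ::
  "'x set \<Rightarrow> 'x reaction set \<Rightarrow> 'x reaction set \<Rightarrow> 'x reaction set \<Rightarrow> bool" where
  "strictly_thermodynamically_sound X R Rrev Rirr \<longleftrightarrow>
     (\<forall>\<gamma>::real. \<gamma> > 1 \<longrightarrow> (\<exists>g. thermodynamic X R g \<and>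
        (\<forall>r\<in>Rrev. \<bar>g r\<bar> \<le> 1) \<and> (\<forall>r\<in>Rirr. g r \<le> - \<gamma>)))"

end

theory Submission
  imports Defs
begin

text \<open>If v is a futile cycle and g is thermodynamic with \<open>\<bar>g\<bar> \<le> 1\<close> on reversible and
\<open>g \<le> -\<gamma>\<close> on irreversible reactions, then \<open>0 = (\<Sum>r. g r * v r)\<close> is at most
\<open>(\<Sum>rev. v) - \<gamma> * (\<Sum>irr. v)\<close>, which is negative for large \<gamma> once v charges an irreversible
reaction. Conversely, if no futile cycle passes through the reaction i, then \<open>-S\<^sub>i\<close> is not a
nonnegative combination of the columns of S, so Farkas' lemma gives a potential m with
\<open>m\<^sup>T S \<le> 0\<close> and \<open>m\<^sup>T S\<^sub>i < 0\<close>. Summing such potentials over the irreversible reactions and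
scaling yields \<open>g = m\<^sup>T S\<close>: it is orthogonal to ker S, it vanishes on reversible reactions (the
reverse reaction has column \<open>-S\<^sub>r\<close>, and both values are \<open>\<le> 0\<close>), and it is \<open>\<le> -\<gamma>\<close> on
irreversible ones.\<close>

definition dot_on :: "'x set \<Rightarrow> ('x \<Rightarrow> real) \<Rightarrow> ('x \<Rightarrow> real) \<Rightarrow> real" where
  "dot_on X m a = (\<Sum>x\<in>X. m x * a x)"

lemma dot_on_lincomb_left:
  "dot_on X (\<lambda>x. c * f x - e * g x) a = c * dot_on X f a - e * dot_on X g a"
  unfolding dot_on_def by (simp add: algebra_simps sum_subtractf sum_distrib_left)

lemma dot_on_lincomb_right:
  "dot_on X m (\<lambda>x. c * f x - e * g x) = c * dot_on X m f - e * dot_on X m g"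
  unfolding dot_on_def by (simp add: algebra_simps sum_subtractf sum_distrib_left)

lemma dot_on_scale_left: "dot_on X (\<lambda>x. c * m x) a = c * dot_on X m a"
  unfolding dot_on_def by (simp add: sum_distrib_left algebra_simps)

lemma dot_on_uminus_right: "dot_on X m (\<lambda>x. - a x) = - dot_on X m a"
  unfolding dot_on_def by (simp add: sum_negf)

lemma dot_on_sum_left: "dot_on X (\<lambda>x. \<Sum>i\<in>I. M i x) a = (\<Sum>i\<in>I. dot_on X (M i) a)"
  unfolding dot_on_def by (simp add: sum_distrib_right sum.swap[of _ X])

lemma dot_on_self_pos:
  assumes "finite X" "x \<in> X" "b x \<noteq> 0"
  shows "dot_on X b b > 0"
proof -
  have "b x * b x \<le> (\<Sum>y\<in>X. b y * b y)"
    using assms by (intro member_le_sum) auto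
  moreover have "b x * b x > 0" using assms(3) not_real_square_gt_zero by blast
  ultimately show ?thesis unfolding dot_on_def by linarith
qed

definition nonneg_combination ::
    "'x set \<Rightarrow> 'j set \<Rightarrow> ('j \<Rightarrow> 'x \<Rightarrow> real) \<Rightarrow> ('x \<Rightarrow> real) \<Rightarrow> bool" where
  "nonneg_combination X J a b \<longleftrightarrow>
     (\<exists>l. (\<forall>j\<in>J. 0 \<le> l j) \<and> (\<forall>x\<in>X. b x = (\<Sum>j\<in>J. l j * a j x)))"

lemma nonneg_combination_mono:
  assumes "nonneg_combination X J a b" "J \<subseteq> J'" "finite J'"
  shows "nonneg_combination X J' a b"
proof -
  obtain l where l: "\<forall>j\<in>J. 0 \<le> l j" "\<forall>x\<in>X. b x = (\<Sum>j\<in>J. l j * a j x)"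
    using assms(1) unfolding nonneg_combination_def by blast
  define l' where "l' j = (if j \<in> J then l j else 0)" for j
  have "(\<Sum>j\<in>J'. l' j * a j x) = (\<Sum>j\<in>J. l j * a j x)" for x
    using assms(2,3) by (intro sum.mono_neutral_cong_right) (auto simp: l'_def)
  then show ?thesis
    unfolding nonneg_combination_def using l by (intro exI[of _ l']) (auto simp: l'_def)
qed

text \<open>The elimination step of the inductive proof of Farkas' lemma: the primed vectors are the
projections along \<open>a k\<close> onto the hyperplane \<open>m\<^sup>\<perp>\<close>.\<close>

lemma nonneg_combination_unproject:
  fixes X :: "'x set" and m :: "'x \<Rightarrow> real" and a :: "'j \<Rightarrow> 'x \<Rightarrow> real" and k :: 'j
  defines "p \<equiv> dot_on X m (a k)"
  assumes p: "p > 0" and m: "\<forall>j\<in>J. dot_on X m (a j) \<le> 0" "dot_on X m b > 0"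
    and "finite J" "k \<notin> J"
    and comb: "nonneg_combination X J (\<lambda>j x. p * a j x - dot_on X m (a j) * a k x)
                 (\<lambda>x. p * b x - dot_on X m b * a k x)"
  shows "nonneg_combination X (insert k J) a b"
proof -
  obtain l where l: "\<forall>j\<in>J. 0 \<le> l j"
    and l_eq: "\<forall>x\<in>X. p * b x - dot_on X m b * a k x
                       = (\<Sum>j\<in>J. l j * (p * a j x - dot_on X m (a j) * a k x))"
    using comb unfolding nonneg_combination_def by blast
  define s where "s = (\<Sum>j\<in>J. l j * dot_on X m (a j))"
  have s: "s \<le> 0"
    unfolding s_def using l m(1) by (intro sum_nonpos) (simp add: mult_nonneg_nonpos)
  define L where "L = l(k := (dot_on X m b - s) / p)"
  have "\<forall>j\<in>insert k J. 0 \<le> L j" using l p s m(2) unfolding L_def by auto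
  moreover have "b x = (\<Sum>j\<in>insert k J. L j * a j x)" if "x \<in> X" for x
  proof -
    have "(\<Sum>j\<in>J. L j * a j x) = (\<Sum>j\<in>J. l j * a j x)"
      using \<open>k \<notin> J\<close> by (intro sum.cong) (auto simp: L_def)
    then have "(\<Sum>j\<in>insert k J. L j * a j x)
               = (dot_on X m b - s) / p * a k x + (\<Sum>j\<in>J. l j * a j x)"
      using \<open>finite J\<close> \<open>k \<notin> J\<close> by (simp add: L_def)
    then have "p * (\<Sum>j\<in>insert k J. L j * a j x)
               = (dot_on X m b - s) * a k x + p * (\<Sum>j\<in>J. l j * a j x)"
      using p by (simp add: distrib_left)
    moreover have "p * b x = p * (\<Sum>j\<in>J. l j * a j x) + (dot_on X m b - s) * a k x"
      using l_eq \<open>x \<in> X\<close> unfolding s_def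
      by (simp add: algebra_simps sum_subtractf sum_distrib_left sum_distrib_right)
    ultimately have "p * b x = p * (\<Sum>j\<in>insert k J. L j * a j x)" by linarith
    then show ?thesis using p by simp
  qed
  ultimately show ?thesis unfolding nonneg_combination_def by blast
qed

lemma farkas_lemma:
  assumes "finite X" "finite J" "\<not> nonneg_combination X J a b"
  shows "\<exists>m. (\<forall>j\<in>J. dot_on X m (a j) \<le> 0) \<and> dot_on X m b > 0"
  using assms(2,3)
proof (induction J arbitrary: a b rule: finite_induct)
  case empty
  then obtain x where "x \<in> X" "b x \<noteq> 0"
    unfolding nonneg_combination_def by auto
  then show ?case using dot_on_self_pos[OF assms(1)] by blast
next
  case (insert k J)
  have "\<not> nonneg_combination X J a b"
    using insert nonneg_combination_mono[of X J a b "insert k J"] by blast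
  with insert.IH obtain m where m: "\<forall>j\<in>J. dot_on X m (a j) \<le> 0" "dot_on X m b > 0"
    by blast
  show ?case
  proof (cases "dot_on X m (a k) \<le> 0")
    case True
    then show ?thesis using m by auto
  next
    case False
    define p where "p = dot_on X m (a k)"
    have "\<not> nonneg_combination X J (\<lambda>j x. p * a j x - dot_on X m (a j) * a k x)
            (\<lambda>x. p * b x - dot_on X m b * a k x)"
      using nonneg_combination_unproject[of X m a k J b] False m insert.hyps insert.prems
      unfolding p_def by auto
    with insert.IH obtain n where
      n: "\<forall>j\<in>J. dot_on X n (\<lambda>x. p * a j x - dot_on X m (a j) * a k x) \<le> 0"
         "dot_on X n (\<lambda>x. p * b x - dot_on X m b * a k x) > 0"
      by blast
    define \<eta> where "\<eta> x = p * n x - dot_on X n (a k) * m x" for x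
    have \<eta>: "dot_on X \<eta> c = dot_on X n (\<lambda>x. p * c x - dot_on X m c * a k x)" for c
      unfolding \<eta>_def dot_on_lincomb_left dot_on_lincomb_right by (simp add: mult.commute)
    have "dot_on X \<eta> (a k) = 0"
      unfolding \<eta> p_def by (simp add: dot_on_def)
    then have "\<forall>j\<in>insert k J. dot_on X \<eta> (a j) \<le> 0"
      using n(1) \<eta> by auto
    moreover have "dot_on X \<eta> b > 0" using n(2) \<eta> by simp
    ultimately show ?thesis by blast
  qed
qed

definition stoich_vec :: "'x reaction \<Rightarrow> 'x \<Rightarrow> real" where
  "stoich_vec r x = real_of_int (stoich x r)"

lemma stoich_vec_rev_reaction: "stoich_vec (rev_reaction r) = (\<lambda>x. - stoich_vec r x)"
  unfolding stoich_vec_def stoich_def rev_reaction_def by auto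

lemma thermodynamic_dot_stoich: "thermodynamic X R (\<lambda>r. dot_on X m (stoich_vec r))"
  unfolding thermodynamic_def
proof (intro allI impI)
  fix v assume "in_ker_S X R v"
  then have "(\<Sum>x\<in>X. m x * (\<Sum>r\<in>R. stoich_vec r x * v r)) = 0"
    unfolding in_ker_S_def stoich_vec_def by simp
  then show "(\<Sum>r\<in>R. dot_on X m (stoich_vec r) * v r) = 0"
    unfolding dot_on_def
    by (simp add: sum_distrib_left sum_distrib_right sum.swap[of _ R] algebra_simps)
qed

lemma futile_cycle_if_nonneg_combination:
  assumes "finite R" "i \<in> R"
    and "nonneg_combination X R stoich_vec (\<lambda>x. - stoich_vec i x)"
  shows "\<exists>v. futile_cycle X R v \<and> v i > 0"
proof -
  obtain l where l: "\<forall>r\<in>R. 0 \<le> l r" "\<forall>x\<in>X. - stoich_vec i x = (\<Sum>r\<in>R. l r * stoich_vec r x)"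
    using assms(3) unfolding nonneg_combination_def by blast
  define v where "v = l(i := l i + 1)"
  have "(\<Sum>r\<in>R. stoich_vec r x * v r) = (\<Sum>r\<in>R. l r * stoich_vec r x) + stoich_vec i x" for x
    using assms(1,2) by (simp add: v_def sum.remove algebra_simps)
  then have "in_ker_S X R v"
    using l(2) unfolding in_ker_S_def stoich_vec_def by force
  moreover have "v i > 0" using l(1) assms(2) by (simp add: v_def add_nonneg_pos)
  moreover then have "vec_pos R v"
    using l(1) assms(2) unfolding vec_pos_def v_def by auto
  ultimately show ?thesis unfolding futile_cycle_def by blast
qed

lemma separating_potential:
  assumes "finite X" "finite R" "i \<in> R" "\<not> (\<exists>v. futile_cycle X R v \<and> v i > 0)"
  shows "\<exists>m. (\<forall>r\<in>R. dot_on X m (stoich_vec r) \<le> 0) \<and> dot_on X m (stoich_vec i) \<le> -1"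
proof -
  obtain m where m: "\<forall>r\<in>R. dot_on X m (stoich_vec r) \<le> 0"
    and "dot_on X m (\<lambda>x. - stoich_vec i x) > 0"
    using farkas_lemma[OF assms(1,2)] futile_cycle_if_nonneg_combination assms(2-4) by blast
  then have pos: "- dot_on X m (stoich_vec i) > 0" by (simp add: dot_on_uminus_right)
  define c where "c = 1 / - dot_on X m (stoich_vec i)"
  have "c > 0" using pos by (simp add: c_def)
  then have "\<forall>r\<in>R. dot_on X (\<lambda>x. c * m x) (stoich_vec r) \<le> 0"
    using m by (simp add: dot_on_scale_left mult_nonneg_nonpos)
  moreover have "dot_on X (\<lambda>x. c * m x) (stoich_vec i) = -1"
    unfolding dot_on_scale_left using pos by (simp add: c_def)
  ultimately show ?thesis by fastforce
qed

lemma common_separating_potential: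
  assumes "finite X" "finite R" "I \<subseteq> R" "\<not> (\<exists>v. futile_cycle X R v \<and> (\<exists>i\<in>I. v i > 0))"
  shows "\<exists>m. (\<forall>r\<in>R. dot_on X m (stoich_vec r) \<le> 0) \<and> (\<forall>i\<in>I. dot_on X m (stoich_vec i) \<le> -1)"
proof -
  obtain M where M: "\<And>i. i \<in> I \<Longrightarrow> (\<forall>r\<in>R. dot_on X (M i) (stoich_vec r) \<le> 0)
                                       \<and> dot_on X (M i) (stoich_vec i) \<le> -1"
    using separating_potential[OF assms(1,2)] assms(3,4) by (metis subsetD)
  define m where "m x = (\<Sum>i\<in>I. M i x)" for x
  have fin: "finite I" using assms(2,3) finite_subset by blast
  have "\<forall>r\<in>R. dot_on X m (stoich_vec r) \<le> 0"
    unfolding m_def dot_on_sum_left using M by (auto intro: sum_nonpos)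
  moreover have "dot_on X m (stoich_vec i) \<le> -1" if "i \<in> I" for i
  proof -
    have "dot_on X m (stoich_vec i)
          = dot_on X (M i) (stoich_vec i) + (\<Sum>j\<in>I - {i}. dot_on X (M j) (stoich_vec i))"
      unfolding m_def dot_on_sum_left using that fin by (simp add: sum.remove)
    moreover have "(\<Sum>j\<in>I - {i}. dot_on X (M j) (stoich_vec i)) \<le> 0"
      using M that assms(3) by (intro sum_nonpos) auto
    ultimately show ?thesis using M[OF that] by simp
  qed
  ultimately show ?thesis by blast
qed

lemma dot_stoich_reversible_eq_0:
  assumes "\<forall>r\<in>R. dot_on X m (stoich_vec r) \<le> 0" "r \<in> R" "rev_reaction r \<in> R"
  shows "dot_on X m (stoich_vec r) = 0"
proof -
  have "dot_on X m (stoich_vec (rev_reaction r)) = - dot_on X m (stoich_vec r)"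
    by (simp add: stoich_vec_rev_reaction dot_on_uminus_right)
  moreover have "dot_on X m (stoich_vec (rev_reaction r)) \<le> 0" "dot_on X m (stoich_vec r) \<le> 0"
    using assms by auto
  ultimately show ?thesis by linarith
qed

lemma sound_if_no_irreversible_futile_cycle:
  assumes "mixed_RN X R Rrev Rirr"
    and "\<not> (\<exists>v. futile_cycle X R v \<and> (\<exists>r\<in>Rirr. v r > 0))"
  shows "strictly_thermodynamically_sound X R Rrev Rirr"
proof -
  have fin: "finite X" "finite R" and "Rirr \<subseteq> R" "Rrev \<subseteq> R"
    and rev: "\<forall>r\<in>Rrev. rev_reaction r \<in> Rrev"
    using assms(1) unfolding mixed_RN_def reaction_network_def by auto
  obtain m where m: "\<forall>r\<in>R. dot_on X m (stoich_vec r) \<le> 0"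
    and m_irr: "\<forall>i\<in>Rirr. dot_on X m (stoich_vec i) \<le> -1"
    using common_separating_potential[OF fin \<open>Rirr \<subseteq> R\<close> assms(2)] by blast
  have m_rev: "\<forall>r\<in>Rrev. dot_on X m (stoich_vec r) = 0"
    using dot_stoich_reversible_eq_0[OF m] rev \<open>Rrev \<subseteq> R\<close> by blast
  show ?thesis
    unfolding strictly_thermodynamically_sound_def
  proof (intro allI impI)
    fix \<gamma> :: real assume "\<gamma> > 1"
    define g where "g r = dot_on X (\<lambda>x. \<gamma> * m x) (stoich_vec r)" for r
    have "thermodynamic X R g" unfolding g_def by (rule thermodynamic_dot_stoich)
    moreover have "\<forall>r\<in>Rrev. \<bar>g r\<bar> \<le> 1" using m_rev by (simp add: g_def dot_on_scale_left)
    moreover have "g i \<le> - \<gamma>" if "i \<in> Rirr" for i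
    proof -
      have "\<gamma> * dot_on X m (stoich_vec i) \<le> \<gamma> * -1"
        using m_irr that \<open>\<gamma> > 1\<close> by (intro mult_left_mono) auto
      then show ?thesis by (simp add: g_def dot_on_scale_left)
    qed
    ultimately show "\<exists>g. thermodynamic X R g \<and> (\<forall>r\<in>Rrev. \<bar>g r\<bar> \<le> 1) \<and> (\<forall>r\<in>Rirr. g r \<le> - \<gamma>)"
      by blast
  qed
qed

lemma futile_cycle_energy_bound:
  assumes "finite R" "R = Rrev \<union> Rirr" "Rrev \<inter> Rirr = {}"
    and "thermodynamic X R g" "futile_cycle X R v"
    and "\<forall>r\<in>Rrev. \<bar>g r\<bar> \<le> 1" "\<forall>r\<in>Rirr. g r \<le> - \<gamma>"
  shows "\<gamma> * (\<Sum>r\<in>Rirr. v r) \<le> (\<Sum>r\<in>Rrev. v r)"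
proof -
  have v: "\<forall>r\<in>R. 0 \<le> v r"
    using assms(5) unfolding futile_cycle_def vec_pos_def by blast
  have "0 = (\<Sum>r\<in>R. g r * v r)"
    using assms(4,5) unfolding thermodynamic_def futile_cycle_def by simp
  also have "\<dots> = (\<Sum>r\<in>Rrev. g r * v r) + (\<Sum>r\<in>Rirr. g r * v r)"
    using assms(1-3) by (simp add: sum.union_disjoint)
  also have "\<dots> \<le> (\<Sum>r\<in>Rrev. 1 * v r) + (\<Sum>r\<in>Rirr. - \<gamma> * v r)"
    using v assms(2,6,7) by (intro add_mono sum_mono mult_right_mono) (auto simp: abs_le_iff)
  finally show ?thesis by (simp add: sum_distrib_left sum_negf)
qed

lemma no_irreversible_futile_cycle_if_sound:
  assumes "mixed_RN X R Rrev Rirr" "strictly_thermodynamically_sound X R Rrev Rirr"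
    and "futile_cycle X R v" "i \<in> Rirr" "v i > 0"
  shows False
proof -
  have R: "finite R" "R = Rrev \<union> Rirr" "Rrev \<inter> Rirr = {}"
    using assms(1) unfolding mixed_RN_def reaction_network_def by auto
  have v: "\<forall>r\<in>R. 0 \<le> v r" using assms(3) unfolding futile_cycle_def vec_pos_def by blast
  define P where "P = (\<Sum>r\<in>Rrev. v r)"
  define Q where "Q = (\<Sum>r\<in>Rirr. v r)"
  have "P \<ge> 0" unfolding P_def using v R by (intro sum_nonneg) auto
  have "v i \<le> Q" unfolding Q_def using v R assms(4) by (intro member_le_sum) auto
  then have "Q > 0" using assms(5) by simp
  define \<gamma> where "\<gamma> = P / Q + 2"
  have "P / Q \<ge> 0" using \<open>P \<ge> 0\<close> \<open>Q > 0\<close> by simp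
  then have "\<gamma> > 1" by (simp add: \<gamma>_def)
  then obtain g where "thermodynamic X R g" "\<forall>r\<in>Rrev. \<bar>g r\<bar> \<le> 1" "\<forall>r\<in>Rirr. g r \<le> - \<gamma>"
    using assms(2) unfolding strictly_thermodynamically_sound_def by blast
  then have "\<gamma> * Q \<le> P"
    using futile_cycle_energy_bound[OF R _ assms(3)] unfolding P_def Q_def by blast
  moreover have "\<gamma> * Q = P + 2 * Q" using \<open>Q > 0\<close> by (simp add: \<gamma>_def field_simps)
  ultimately show False using \<open>Q > 0\<close> by simp
qed

theorem theorem3:
  fixes X :: "'x set" and R Rrev Rirr :: "'x reaction set"
  assumes "mixed_RN X R Rrev Rirr"
    and "closed_RN X R"
  shows "strictly_thermodynamically_sound X R Rrev Rirr \<longleftrightarrow>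
         \<not> (\<exists>v. futile_cycle X R v \<and> (\<exists>r\<in>Rirr. v r > 0))"
  using sound_if_no_irreversible_futile_cycle[OF assms(1)]
    no_irreversible_futile_cycle_if_sound[OF assms(1)] by blast

end
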